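(* Let $R_1,R_2$ be discrete valuation domains with maximal ideals $P_1=R_1p_1$ and $P_2=R_2p_2$, let $\overline{R}$ be a field, $\mathcal{V}_i:R_i\to\overline{R}$ surjective ring homomorphisms with $\ker\mathcal{V}_i=P_i$, and $R=\{(r_1,r_2)\in R_1\times R_2:\mathcal{V}_1(r_1)=\mathcal{V}_2(r_2)\}$. Then for all integers $m,n\ge1$ the following separated $R$-modules are indecomposable pseudo-absorbing primary multiplication $R$-modules: (1) $R$; (2) $(R_1/P_1^n\to\overline{R}\leftarrow R_2/P_2^m)$; (3) $(R_1\to\overline{R}\leftarrow R_2/P_2^m)$; (4) $(R_1/P_1^n\to\overline{R}\leftarrow R_2)$.
   Context: For an $R_1$-module $A$ and an $R_2$-module $B$ among $R_1,R_1/P_1^n$ resp. $R_2,R_2/P_2^m$, with $g:A\to\overline{R}$, $h:B\to\overline{R}$ the surjections induced by $\mathcal{V}_1,\mathcal{V}_2$, the notation $(A\to\overline{R}\leftarrow B)$ denotes the $R$-module $\{(a,b)\in A\oplus B:g(a)=h(b)\}$ with $(r_1,r_2)(a,b)=(r_1a,r_2b)$. An $R$-module $S$ is separated if $(P_1\oplus0)S\cap(0\oplus P_2)S=0$, where $P_1\oplus0=\{(a,0):a\in P_1\}$ and $0\oplus P_2=\{(0,b):b\in P_2\}$. A proper ideal $I$ of a commutative ring is 2-absorbing primary if whenever $abc\in I$ then $ab\in I$ or $ac\in\sqrt I$ or $bc\in\sqrt I$. A proper submodule $N$ of an $R$-module $M$ is pseudo-absorbing primary if $(N:_RM)=\{r\in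 R:rM\subseteq N\}$ is a 2-absorbing primary ideal of $R$. $M$ is a pseudo-absorbing primary multiplication module if every pseudo-absorbing primary submodule $N$ of $M$ satisfies $N=IM$ for some ideal $I$ of $R$. *)

theory Defs
  imports "HOL-Algebra.Algebra"
begin

definition dvr :: "('a, 'm) ring_scheme \<Rightarrow> bool" where
  "dvr R \<longleftrightarrow> principal_domain R \<and> \<not> field R \<and> (\<exists>!P. maximalideal P R)"

definition pullback_ring ::
  "('a, 'm) ring_scheme \<Rightarrow> ('b, 'n) ring_scheme \<Rightarrow> ('a \<Rightarrow> 'c) \<Rightarrow> ('b \<Rightarrow> 'c) \<Rightarrow> ('a \<times> 'b) ring" where
  "pullback_ring R1 R2 V1 V2 =
     \<lparr>carrier = {(r1, r2). r1 \<in> carrier R1 \<and> r2 \<in> carrier R2 \<and> V1 r1 = V2 r2},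
      monoid.mult = (\<lambda>x y. (fst x \<otimes>\<^bsub>R1\<^esub> fst y, snd x \<otimes>\<^bsub>R2\<^esub> snd y)),
      monoid.one = (\<one>\<^bsub>R1\<^esub>, \<one>\<^bsub>R2\<^esub>),
      ring.zero = (\<zero>\<^bsub>R1\<^esub>, \<zero>\<^bsub>R2\<^esub>),
      ring.add = (\<lambda>x y. (fst x \<oplus>\<^bsub>R1\<^esub> fst y, snd x \<oplus>\<^bsub>R2\<^esub> snd y))\<rparr>"

definition self_module :: "('a, 'm) ring_scheme \<Rightarrow> ('a, 'a) module" where
  "self_module R =
     \<lparr>carrier = carrier R, monoid.mult = monoid.mult R, monoid.one = monoid.one R,
      ring.zero = ring.zero R, ring.add = ring.add R, module.smult = monoid.mult R\<rparr>"

definition quot_module :: "('a, 'm) ring_scheme \<Rightarrow> 'a set \<Rightarrow> ('a, 'a set) module" where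
  "quot_module R I =
     \<lparr>carrier = a_rcosets\<^bsub>R\<^esub> I, monoid.mult = rcoset_mult R I, monoid.one = a_r_coset R I \<one>\<^bsub>R\<^esub>,
      ring.zero = I, ring.add = set_add R,
      module.smult = (\<lambda>s Y. rcoset_mult R I (a_r_coset R I s) Y)\<rparr>"

(* The map R/I \<rightarrow> Rbar induced by V (for I contained in the kernel of V). *)
definition induced_map :: "('a \<Rightarrow> 'c) \<Rightarrow> 'a set \<Rightarrow> 'c" where
  "induced_map f S = the_elem (f ` S)"

(* (A \<rightarrow> Rbar \<leftarrow> B) = {(a,b) \<in> A \<oplus> B : g a = h b}, with (r1,r2)(a,b) = (r1 a, r2 b). *)
definition pb_module ::
  "('a, 'x, 'p) module_scheme \<Rightarrow> ('b, 'y, 'q) module_scheme \<Rightarrow> ('x \<Rightarrow> 'c) \<Rightarrow> ('y \<Rightarrow> 'c)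
     \<Rightarrow> ('a \<times> 'b, 'x \<times> 'y) module" where
  "pb_module A B g h =
     \<lparr>carrier = {(a, b). a \<in> carrier A \<and> b \<in> carrier B \<and> g a = h b},
      monoid.mult = (\<lambda>_ _. (\<zero>\<^bsub>A\<^esub>, \<zero>\<^bsub>B\<^esub>)),
      monoid.one = (\<zero>\<^bsub>A\<^esub>, \<zero>\<^bsub>B\<^esub>),
      ring.zero = (\<zero>\<^bsub>A\<^esub>, \<zero>\<^bsub>B\<^esub>),
      ring.add = (\<lambda>x y. (fst x \<oplus>\<^bsub>A\<^esub> fst y, snd x \<oplus>\<^bsub>B\<^esub> snd y)),
      module.smult = (\<lambda>r x. (fst r \<odot>\<^bsub>A\<^esub> fst x, snd r \<odot>\<^bsub>B\<^esub> snd x))\<rparr>"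

definition ideal_mod_prod ::
  "('r, 'm) ring_scheme \<Rightarrow> 'r set \<Rightarrow> ('r, 'x, 'p) module_scheme \<Rightarrow> 'x set" where
  "ideal_mod_prod R I M =
     \<Inter>{N. submodule N R M \<and> {r \<odot>\<^bsub>M\<^esub> x | r x. r \<in> I \<and> x \<in> carrier M} \<subseteq> N}"

definition mod_colon ::
  "('r, 'm) ring_scheme \<Rightarrow> 'x set \<Rightarrow> ('r, 'x, 'p) module_scheme \<Rightarrow> 'r set" where
  "mod_colon R N M = {r \<in> carrier R. \<forall>x \<in> carrier M. r \<odot>\<^bsub>M\<^esub> x \<in> N}"

definition radical :: "('r, 'm) ring_scheme \<Rightarrow> 'r set \<Rightarrow> 'r set" where
  "radical R I = {r \<in> carrier R. \<exists>k::nat. r [^]\<^bsub>R\<^esub> k \<in> I}"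

definition two_absorbing_primary :: "('r, 'm) ring_scheme \<Rightarrow> 'r set \<Rightarrow> bool" where
  "two_absorbing_primary R I \<longleftrightarrow> ideal I R \<and> I \<noteq> carrier R \<and>
     (\<forall>a \<in> carrier R. \<forall>b \<in> carrier R. \<forall>c \<in> carrier R.
        a \<otimes>\<^bsub>R\<^esub> b \<otimes>\<^bsub>R\<^esub> c \<in> I \<longrightarrow>
        a \<otimes>\<^bsub>R\<^esub> b \<in> I \<or> a \<otimes>\<^bsub>R\<^esub> c \<in> radical R I \<or> b \<otimes>\<^bsub>R\<^esub> c \<in> radical R I)"

definition pseudo_absorbing_primary ::
  "('r, 'm) ring_scheme \<Rightarrow> ('r, 'x, 'p) module_scheme \<Rightarrow> 'x set \<Rightarrow> bool" where
  "pseudo_absorbing_primary R M N \<longleftrightarrow> submodule N R M \<and> N \<noteq> carrier M \<and>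
     two_absorbing_primary R (mod_colon R N M)"

definition pap_multiplication_module ::
  "('r, 'm) ring_scheme \<Rightarrow> ('r, 'x, 'p) module_scheme \<Rightarrow> bool" where
  "pap_multiplication_module R M \<longleftrightarrow>
     (\<forall>N. pseudo_absorbing_primary R M N \<longrightarrow> (\<exists>I. ideal I R \<and> N = ideal_mod_prod R I M))"

definition indecomposable ::
  "('r, 'm) ring_scheme \<Rightarrow> ('r, 'x, 'p) module_scheme \<Rightarrow> bool" where
  "indecomposable R M \<longleftrightarrow> carrier M \<noteq> {\<zero>\<^bsub>M\<^esub>} \<and>
     \<not> (\<exists>N K. submodule N R M \<and> submodule K R M \<and> N \<noteq> {\<zero>\<^bsub>M\<^esub>} \<and> K \<noteq> {\<zero>\<^bsub>M\<^esub>} \<and>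
            N \<inter> K = {\<zero>\<^bsub>M\<^esub>} \<and> set_add M N K = carrier M)"

definition separated ::
  "('a, 'm) ring_scheme \<Rightarrow> ('b, 'n) ring_scheme \<Rightarrow> ('a \<Rightarrow> 'c) \<Rightarrow> ('b \<Rightarrow> 'c) \<Rightarrow> 'a set \<Rightarrow> 'b set
     \<Rightarrow> ('a \<times> 'b, 'x, 'p) module_scheme \<Rightarrow> bool" where
  "separated R1 R2 V1 V2 P1 P2 S \<longleftrightarrow>
     ideal_mod_prod (pullback_ring R1 R2 V1 V2) {(a, \<zero>\<^bsub>R2\<^esub>) | a. a \<in> P1} S \<inter>
     ideal_mod_prod (pullback_ring R1 R2 V1 V2) {(\<zero>\<^bsub>R1\<^esub>, b) | b. b \<in> P2} S = {\<zero>\<^bsub>S\<^esub>}"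

end

theory Submission
  imports Defs
begin

text \<open>
  Each of the four modules is a pullback \<open>(A \<rightarrow> Rb \<leftarrow> B)\<close> of cyclic modules \<open>A\<close> over \<open>R\<^sub>1\<close> and
  \<open>B\<close> over \<open>R\<^sub>2\<close> whose generators map to \<open>1\<close>; for \<open>R\<close> itself this is \<open>(R\<^sub>1 \<rightarrow> Rb \<leftarrow> R\<^sub>2)\<close>.
  Since \<open>(r\<^sub>1 a, r\<^sub>2 b)\<close> lies in the pullback exactly when \<open>V\<^sub>1 r\<^sub>1 = V\<^sub>2 r\<^sub>2\<close>, the pair of generators
  generates it over \<open>R\<close>. A cyclic module \<open>M\<close> over a commutative ring satisfies \<open>N = (N :\<^sub>R M) M\<close>
  for every submodule \<open>N\<close>, so it is a pseudo-absorbing primary multiplication module. Because each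
  \<open>R\<^sub>i\<close> is local with maximal ideal \<open>ker V\<^sub>i\<close>, \<open>R\<close> is local, its non-units being the pairs with
  \<open>V\<^sub>1 r\<^sub>1 = 0\<close>; hence a nonzero cyclic \<open>R\<close>-module is indecomposable. Separation holds because
  \<open>(P\<^sub>1 \<oplus> 0)S\<close> has trivial second and \<open>(0 \<oplus> P\<^sub>2)S\<close> trivial first component.
\<close>

lemma (in ring_hom_cring) hom_inv_Units:
  assumes "a \<in> Units R"
  shows "h (inv\<^bsub>R\<^esub> a) = inv\<^bsub>S\<^esub> (h a)"
proof -
  have "h a \<otimes>\<^bsub>S\<^esub> h (inv\<^bsub>R\<^esub> a) = \<one>\<^bsub>S\<^esub>"
    using assms by (metis R.Units_closed R.Units_inv_closed R.Units_r_inv hom_mult hom_one)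
  then show ?thesis using assms by (intro S.comm_inv_char[symmetric]) auto
qed

lemma dvr_Units:
  assumes "dvr R" and P: "maximalideal P R"
  shows "carrier R - P \<subseteq> Units R"
proof
  interpret principal_domain R using \<open>dvr R\<close> by (simp add: dvr_def)
  fix a assume a: "a \<in> carrier R - P"
  show "a \<in> Units R"
  proof (rule ccontr)
    assume "a \<notin> Units R"
    moreover have "a \<noteq> \<zero>\<^bsub>R\<^esub>"
      using a P by (auto dest: maximalideal.axioms(1) ideal.axioms(1) additive_subgroup.zero_closed)
    ultimately obtain b where b: "b \<in> carrier R" "ring_irreducible\<^bsub>R\<^esub> b" "b divides\<^bsub>R\<^esub> a"
      using a exists_irreducible_divisor[of a] by blast
    then have "PIdl\<^bsub>R\<^esub> b = P"
      using irreducible_imp_maximalideal P \<open>dvr R\<close> unfolding dvr_def by blast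
    moreover have "a \<in> PIdl\<^bsub>R\<^esub> b"
      using to_contain_is_to_divide[of b a] b a cgenideal_self[of a] by blast
    ultimately show False using a by simp
  qed
qed

lemma (in cring) PIdl_pow_subset:
  fixes n :: nat
  assumes "p \<in> carrier R" and "n \<ge> 1"
  shows "PIdl (p [^] n) \<subseteq> PIdl p"
proof (rule cgenideal_minimal[OF cgenideal_ideal[OF assms(1)]])
  obtain k where "n = Suc k" using assms(2) by (cases n) auto
  then have "p [^] n = p [^] k \<otimes> p" using assms(1) by simp
  then show "p [^] n \<in> PIdl p"
    using assms(1) unfolding cgenideal_def by blast
qed

lemma (in ring_hom_ring) induced_map_coset:
  assumes "ideal I R" and "I \<subseteq> a_kernel R S h" and a: "a \<in> carrier R"
  shows "induced_map h (I +>\<^bsub>R\<^esub> a) = h a"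
proof -
  interpret I: ideal I R by fact
  have "h ` (I +>\<^bsub>R\<^esub> a) = {h a}"
  proof
    show "h ` (I +>\<^bsub>R\<^esub> a) \<subseteq> {h a}"
    proof
      fix y assume "y \<in> h ` (I +>\<^bsub>R\<^esub> a)"
      then obtain z where z: "z \<in> I +>\<^bsub>R\<^esub> a" "y = h z" by blast
      from z(1) obtain i where i: "i \<in> I" "z = i \<oplus>\<^bsub>R\<^esub> a"
        unfolding a_r_coset_def' by (rule UN_E) simp
      have "i \<in> a_kernel R S h" using i(1) assms(2) by blast
      then have "i \<in> carrier R" "h i = \<zero>\<^bsub>S\<^esub>" unfolding a_kernel_def' by simp_all
      then show "y \<in> {h a}" using z i a by simp
    qed
    show "{h a} \<subseteq> h ` (I +>\<^bsub>R\<^esub> a)" using I.a_rcos_self[OF a] by blast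
  qed
  then show ?thesis by (simp add: induced_map_def)
qed

lemma (in module) submodule_zero_closed: "submodule N R M \<Longrightarrow> \<zero>\<^bsub>M\<^esub> \<in> N"
  using subgroup.one_closed[OF submodule.axioms(1)] by force

lemma (in module) submoduleI':
  assumes "H \<subseteq> carrier M" "\<zero>\<^bsub>M\<^esub> \<in> H"
    and "\<And>a b. a \<in> H \<Longrightarrow> b \<in> H \<Longrightarrow> a \<oplus>\<^bsub>M\<^esub> b \<in> H"
    and "\<And>r a. r \<in> carrier R \<Longrightarrow> a \<in> H \<Longrightarrow> r \<odot>\<^bsub>M\<^esub> a \<in> H"
  shows "submodule H R M"
proof (rule submoduleI)
  fix a assume a: "a \<in> H"
  then have "\<ominus>\<^bsub>M\<^esub> a = (\<ominus> \<one>) \<odot>\<^bsub>M\<^esub> a"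
    using assms(1) by (auto simp: smult_l_minus)
  then show "\<ominus>\<^bsub>M\<^esub> a \<in> H" using a assms(4) by simp
qed (use assms in auto)

lemma (in module) ideal_mod_prod_least:
  assumes "submodule N R M" and "\<And>r x. r \<in> I \<Longrightarrow> x \<in> carrier M \<Longrightarrow> r \<odot>\<^bsub>M\<^esub> x \<in> N"
  shows "ideal_mod_prod R I M \<subseteq> N"
  unfolding ideal_mod_prod_def using assms by blast

lemma (in module) zero_in_ideal_mod_prod: "\<zero>\<^bsub>M\<^esub> \<in> ideal_mod_prod R I M"
  unfolding ideal_mod_prod_def using submodule_zero_closed by blast

lemma (in module) mod_colon_ideal:
  assumes N: "submodule N R M"
  shows "ideal (mod_colon R N M) R"
proof (rule idealI)
  show "subgroup (mod_colon R N M) (add_monoid R)"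
  proof (rule R.add.subgroupI)
    show "mod_colon R N M \<subseteq> carrier R" by (auto simp: mod_colon_def)
    show "mod_colon R N M \<noteq> {}"
      using submodule_zero_closed[OF N] by (auto simp: mod_colon_def)
  next
    fix a assume "a \<in> mod_colon R N M"
    then show "\<ominus> a \<in> mod_colon R N M"
      using submoduleE(3)[OF N] by (auto simp: mod_colon_def smult_l_minus)
  next
    fix a b assume "a \<in> mod_colon R N M" "b \<in> mod_colon R N M"
    then show "a \<oplus> b \<in> mod_colon R N M"
      using submoduleE(5)[OF N] by (auto simp: mod_colon_def smult_l_distr)
  qed
next
  fix a r assume "a \<in> mod_colon R N M" "r \<in> carrier R"
  then show "r \<otimes> a \<in> mod_colon R N M" and "a \<otimes> r \<in> mod_colon R N M"
    using submoduleE(4)[OF N] by (auto simp: mod_colon_def smult_assoc1 m_comm)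
qed (rule ring_axioms)

lemma (in module) cyclic_submodule_eq_ideal_mod_prod:
  assumes x: "x \<in> carrier M" and cyclic: "carrier M = {r \<odot>\<^bsub>M\<^esub> x | r. r \<in> carrier R}"
    and N: "submodule N R M"
  shows "N = ideal_mod_prod R (mod_colon R N M) M"
proof
  show "ideal_mod_prod R (mod_colon R N M) M \<subseteq> N"
    using N by (rule ideal_mod_prod_least) (auto simp: mod_colon_def)
next
  show "N \<subseteq> ideal_mod_prod R (mod_colon R N M) M"
  proof
    fix z assume z: "z \<in> N"
    then obtain r where r: "r \<in> carrier R" "z = r \<odot>\<^bsub>M\<^esub> x"
      using submoduleE(1)[OF N] cyclic by auto
    have "r \<in> mod_colon R N M"
      unfolding mod_colon_def
    proof (safe intro!: r(1))
      fix y assume "y \<in> carrier M"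
      then obtain s where s: "s \<in> carrier R" "y = s \<odot>\<^bsub>M\<^esub> x" using cyclic by auto
      have "r \<odot>\<^bsub>M\<^esub> y = s \<odot>\<^bsub>M\<^esub> z"
        using r s x by (simp add: smult_assoc1[symmetric] m_comm)
      then show "r \<odot>\<^bsub>M\<^esub> y \<in> N" using submoduleE(4)[OF N] s z by simp
    qed
    then show "z \<in> ideal_mod_prod R (mod_colon R N M) M"
      unfolding ideal_mod_prod_def using r x by blast
  qed
qed

lemma (in module) cyclic_pap_multiplication_module:
  assumes "x \<in> carrier M" and "carrier M = {r \<odot>\<^bsub>M\<^esub> x | r. r \<in> carrier R}"
  shows "pap_multiplication_module R M"
  unfolding pap_multiplication_module_def pseudo_absorbing_primary_def
  using cyclic_submodule_eq_ideal_mod_prod[OF assms] mod_colon_ideal by blast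

lemma (in module) cyclic_unit_multiple_generates:
  assumes x: "x \<in> carrier M" and cyclic: "carrier M = {r \<odot>\<^bsub>M\<^esub> x | r. r \<in> carrier R}"
    and H: "submodule H R M" and c: "c \<in> Units R" "c \<odot>\<^bsub>M\<^esub> x \<in> H"
  shows "H = carrier M"
proof -
  have "inv c \<odot>\<^bsub>M\<^esub> (c \<odot>\<^bsub>M\<^esub> x) \<in> H"
    using H c by (simp add: submoduleE(4))
  then have "x \<in> H" using c(1) x by (simp add: smult_assoc1[symmetric] Units_closed)
  then show ?thesis using cyclic submoduleE(1,4)[OF H] by auto
qed

lemma (in module) one_minus_nonunit_if_fixes:
  assumes c: "c \<in> carrier R" and x: "x \<in> carrier M" "x \<noteq> \<zero>\<^bsub>M\<^esub>" and fixed: "c \<odot>\<^bsub>M\<^esub> x = x"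
  shows "\<one> \<ominus> c \<notin> Units R"
proof
  assume unit: "\<one> \<ominus> c \<in> Units R"
  have "x = inv (\<one> \<ominus> c) \<odot>\<^bsub>M\<^esub> ((\<one> \<ominus> c) \<odot>\<^bsub>M\<^esub> x)"
    using unit x by (simp add: smult_assoc1[symmetric] Units_closed)
  also have "(\<one> \<ominus> c) \<odot>\<^bsub>M\<^esub> x = \<one> \<odot>\<^bsub>M\<^esub> x \<oplus>\<^bsub>M\<^esub> (\<ominus> c) \<odot>\<^bsub>M\<^esub> x"
    using c x by (simp only: R.minus_eq smult_l_distr R.one_closed R.a_inv_closed)
  also have "\<dots> = \<zero>\<^bsub>M\<^esub>"
    using c x by (simp add: smult_l_minus fixed M.r_neg)
  finally show False using unit x by simp
qed

text \<open>
  The hypothesis on non-units says that \<open>R\<close> is local. Writing \<open>x = a x + b x\<close> along the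
  decomposition, none of \<open>a\<close>, \<open>b\<close>, \<open>1 - (a + b)\<close> can be a unit, yet they sum to \<open>1\<close>.
\<close>

lemma (in module) cyclic_indecomposable:
  assumes x: "x \<in> carrier M" and cyclic: "carrier M = {r \<odot>\<^bsub>M\<^esub> x | r. r \<in> carrier R}"
    and nonzero: "x \<noteq> \<zero>\<^bsub>M\<^esub>"
    and local: "\<And>a b. a \<in> carrier R \<Longrightarrow> b \<in> carrier R \<Longrightarrow> a \<notin> Units R \<Longrightarrow> b \<notin> Units R \<Longrightarrow>
      a \<oplus> b \<notin> Units R"
  shows "indecomposable R M"
  unfolding indecomposable_def
proof (intro conjI notI)
  show "carrier M = {\<zero>\<^bsub>M\<^esub>} \<Longrightarrow> False" using x nonzero by auto
next
  assume "\<exists>N K. submodule N R M \<and> submodule K R M \<and> N \<noteq> {\<zero>\<^bsub>M\<^esub>} \<and> K \<noteq> {\<zero>\<^bsub>M\<^esub>} \<and>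
            N \<inter> K = {\<zero>\<^bsub>M\<^esub>} \<and> set_add M N K = carrier M"
  then obtain N K where N: "submodule N R M" and K: "submodule K R M"
    and N_nonzero: "N \<noteq> {\<zero>\<^bsub>M\<^esub>}" and K_nonzero: "K \<noteq> {\<zero>\<^bsub>M\<^esub>}"
    and disjoint: "N \<inter> K = {\<zero>\<^bsub>M\<^esub>}" and sum: "set_add M N K = carrier M" by blast
  obtain u v where u: "u \<in> N" and v: "v \<in> K" and x_sum: "x = u \<oplus>\<^bsub>M\<^esub> v"
    using x sum unfolding set_add_def' by blast
  have "u \<in> carrier M" "v \<in> carrier M"
    using u v submoduleE(1)[OF N] submoduleE(1)[OF K] by auto
  then obtain a b where a: "a \<in> carrier R" "u = a \<odot>\<^bsub>M\<^esub> x" and b: "b \<in> carrier R" "v = b \<odot>\<^bsub>M\<^esub> x"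
    using cyclic by auto
  have "a \<notin> Units R"
  proof
    assume "a \<in> Units R"
    then have "N = carrier M" using cyclic_unit_multiple_generates[OF x cyclic N] a u by simp
    then show False using disjoint K_nonzero submoduleE(1)[OF K] by auto
  qed
  moreover have "b \<notin> Units R"
  proof
    assume "b \<in> Units R"
    then have "K = carrier M" using cyclic_unit_multiple_generates[OF x cyclic K] b v by simp
    then show False using disjoint N_nonzero submoduleE(1)[OF N] by auto
  qed
  moreover have "\<one> \<ominus> (a \<oplus> b) \<notin> Units R"
  proof (rule one_minus_nonunit_if_fixes[OF _ x nonzero])
    show "a \<oplus> b \<in> carrier R" using a(1) b(1) by simp
    have "(a \<oplus> b) \<odot>\<^bsub>M\<^esub> x = u \<oplus>\<^bsub>M\<^esub> v"
      using a b x by (simp add: smult_l_distr)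
    also have "\<dots> = x" using x_sum by simp
    finally show "(a \<oplus> b) \<odot>\<^bsub>M\<^esub> x = x" .
  qed
  moreover have "a \<oplus> (b \<oplus> (\<one> \<ominus> (a \<oplus> b))) = \<one>" using a(1) b(1) by algebra
  ultimately show False
    using local a(1) b(1) by (metis R.Units_one_closed R.add.m_closed R.minus_closed R.one_closed)
qed

lemma module_from_ring_hom:
  fixes M :: "('r, 's, 'p) module_scheme"
  assumes "cring S" and "\<phi> \<in> ring_hom R S" and "cring R"
    and "carrier M = carrier S" and "\<And>x y. x \<oplus>\<^bsub>M\<^esub> y = x \<oplus>\<^bsub>S\<^esub> y" and "\<zero>\<^bsub>M\<^esub> = \<zero>\<^bsub>S\<^esub>"
    and "\<And>r x. r \<odot>\<^bsub>M\<^esub> x = \<phi> r \<otimes>\<^bsub>S\<^esub> x"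
  shows "module R M"
proof -
  interpret S: cring S by fact
  interpret \<phi>: ring_hom_cring R S \<phi> by (rule ring_hom_cringI) fact+
  show ?thesis
  proof (rule moduleI)
    show "abelian_group M"
      by (rule abelian_groupI) (auto simp: assms S.a_ac)
  qed (auto simp: assms S.l_distr S.r_distr S.m_assoc)
qed

lemma module_self_module: "cring R \<Longrightarrow> module R (self_module R)"
  by (rule module_from_ring_hom[where S = R and \<phi> = id]) (auto simp: self_module_def)

lemma module_quot_module:
  assumes "cring R" and "ideal I R"
  shows "module R (quot_module R I)"
proof -
  interpret cring R by fact
  interpret ideal I R by fact
  show ?thesis
    by (rule module_from_ring_hom[where S = "R Quot I" and \<phi> = "a_r_coset R I"])
       (simp_all add: quotient_is_cring rcos_ring_hom is_cring, simp_all add: quot_module_def FactRing_def)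
qed

lemma pullback_ring_simps:
  "carrier (pullback_ring R1 R2 V1 V2) = {(r1, r2). r1 \<in> carrier R1 \<and> r2 \<in> carrier R2 \<and> V1 r1 = V2 r2}"
  "x \<otimes>\<^bsub>pullback_ring R1 R2 V1 V2\<^esub> y = (fst x \<otimes>\<^bsub>R1\<^esub> fst y, snd x \<otimes>\<^bsub>R2\<^esub> snd y)"
  "\<one>\<^bsub>pullback_ring R1 R2 V1 V2\<^esub> = (\<one>\<^bsub>R1\<^esub>, \<one>\<^bsub>R2\<^esub>)"
  "\<zero>\<^bsub>pullback_ring R1 R2 V1 V2\<^esub> = (\<zero>\<^bsub>R1\<^esub>, \<zero>\<^bsub>R2\<^esub>)"
  "x \<oplus>\<^bsub>pullback_ring R1 R2 V1 V2\<^esub> y = (fst x \<oplus>\<^bsub>R1\<^esub> fst y, snd x \<oplus>\<^bsub>R2\<^esub> snd y)"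
  by (simp_all add: pullback_ring_def)

lemma cring_pullback_ring:
  assumes "cring R1" and "cring R2" and "ring Rb"
    and h1: "V1 \<in> ring_hom R1 Rb" and h2: "V2 \<in> ring_hom R2 Rb"
  shows "cring (pullback_ring R1 R2 V1 V2)"
proof -
  interpret R1: cring R1 by fact
  interpret R2: cring R2 by fact
  interpret V1: ring_hom_ring R1 Rb V1 by (rule ring_hom_ringI2[OF R1.ring_axioms \<open>ring Rb\<close> h1])
  interpret V2: ring_hom_ring R2 Rb V2 by (rule ring_hom_ringI2[OF R2.ring_axioms \<open>ring Rb\<close> h2])
  let ?R = "pullback_ring R1 R2 V1 V2"
  show ?thesis
  proof (rule cringI)
    show "abelian_group ?R"
    proof (rule abelian_groupI)
      fix x assume "x \<in> carrier ?R"
      then obtain a b where "x = (a, b)" "a \<in> carrier R1" "b \<in> carrier R2" "V1 a = V2 b"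
        by (auto simp: pullback_ring_simps)
      then show "\<exists>y\<in>carrier ?R. y \<oplus>\<^bsub>?R\<^esub> x = \<zero>\<^bsub>?R\<^esub>"
        by (intro bexI[of _ "(\<ominus>\<^bsub>R1\<^esub> a, \<ominus>\<^bsub>R2\<^esub> b)"])
           (simp_all add: pullback_ring_simps R1.l_neg R2.l_neg V1.hom_a_inv V2.hom_a_inv)
    qed (auto simp: pullback_ring_simps R1.a_ac R2.a_ac)
    show "comm_monoid ?R"
      by (rule comm_monoidI) (auto simp: pullback_ring_simps R1.m_ac R2.m_ac)
  qed (auto simp: pullback_ring_simps R1.l_distr R2.l_distr)
qed

text \<open>\<open>local1\<close> and \<open>local2\<close> say that \<open>R\<^sub>i\<close> is local with maximal ideal \<open>ker V\<^sub>i\<close>.\<close>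

locale local_pullback =
  Rb: field Rb + V1: ring_hom_cring R1 Rb V1 + V2: ring_hom_cring R2 Rb V2
  for Rb R1 V1 R2 V2 +
  assumes local1: "carrier R1 - a_kernel R1 Rb V1 \<subseteq> Units R1"
    and local2: "carrier R2 - a_kernel R2 Rb V2 \<subseteq> Units R2"
begin

abbreviation (input) R where "R \<equiv> pullback_ring R1 R2 V1 V2"

lemma Units_pullback: "Units R = {x \<in> carrier R. V1 (fst x) \<noteq> \<zero>\<^bsub>Rb\<^esub>}"
proof (intro equalityI subsetI CollectI conjI)
  fix x assume "x \<in> Units R"
  then obtain y where y: "y \<in> carrier R" "x \<otimes>\<^bsub>R\<^esub> y = \<one>\<^bsub>R\<^esub>" and x: "x \<in> carrier R"
    unfolding Units_def by blast
  then show "x \<in> carrier R" by simp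
  have "fst x \<in> carrier R1" "fst y \<in> carrier R1" "fst x \<otimes>\<^bsub>R1\<^esub> fst y = \<one>\<^bsub>R1\<^esub>"
    using x y by (auto simp: pullback_ring_simps)
  then have "V1 (fst x) \<otimes>\<^bsub>Rb\<^esub> V1 (fst y) = \<one>\<^bsub>Rb\<^esub>"
    by (metis V1.hom_mult V1.hom_one)
  then show "V1 (fst x) \<noteq> \<zero>\<^bsub>Rb\<^esub>"
    using \<open>fst y \<in> carrier R1\<close> by auto
next
  fix x assume "x \<in> {x \<in> carrier R. V1 (fst x) \<noteq> \<zero>\<^bsub>Rb\<^esub>}"
  then obtain a b where x: "x = (a, b)" and a: "a \<in> carrier R1" and b: "b \<in> carrier R2"
    and ab: "V1 a = V2 b" and nonzero: "V1 a \<noteq> \<zero>\<^bsub>Rb\<^esub>"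
    by (auto simp: pullback_ring_simps)
  have "a \<in> carrier R1 - a_kernel R1 Rb V1" "b \<in> carrier R2 - a_kernel R2 Rb V2"
    using a b nonzero ab unfolding a_kernel_def' by auto
  then have a_unit: "a \<in> Units R1" and b_unit: "b \<in> Units R2"
    using local1 local2 by auto
  let ?y = "(inv\<^bsub>R1\<^esub> a, inv\<^bsub>R2\<^esub> b)"
  have "V1 (inv\<^bsub>R1\<^esub> a) = V2 (inv\<^bsub>R2\<^esub> b)"
    using a_unit b_unit ab by (simp add: V1.hom_inv_Units V2.hom_inv_Units)
  then have "?y \<in> carrier R"
    using a_unit b_unit by (simp add: pullback_ring_simps)
  moreover have "?y \<otimes>\<^bsub>R\<^esub> x = \<one>\<^bsub>R\<^esub>" "x \<otimes>\<^bsub>R\<^esub> ?y = \<one>\<^bsub>R\<^esub>"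
    using a_unit b_unit x by (simp_all add: pullback_ring_simps)
  moreover have "x \<in> carrier R" using a b ab x by (simp add: pullback_ring_simps)
  ultimately show "x \<in> Units R" unfolding Units_def by blast
qed

lemma pullback_nonunits_add_closed:
  assumes "x \<in> carrier R" "y \<in> carrier R" "x \<notin> Units R" "y \<notin> Units R"
  shows "x \<oplus>\<^bsub>R\<^esub> y \<notin> Units R"
proof -
  have "fst x \<in> carrier R1" "fst y \<in> carrier R1" "V1 (fst x) = \<zero>\<^bsub>Rb\<^esub>" "V1 (fst y) = \<zero>\<^bsub>Rb\<^esub>"
    using assms by (auto simp: Units_pullback pullback_ring_simps)
  then have "V1 (fst (x \<oplus>\<^bsub>R\<^esub> y)) = \<zero>\<^bsub>Rb\<^esub>"
    by (simp add: pullback_ring_simps)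
  then show ?thesis by (simp add: Units_pullback)
qed

lemma cyclic_indecomposable:
  assumes "module R M" and "x \<in> carrier M" and "carrier M = {r \<odot>\<^bsub>M\<^esub> x | r. r \<in> carrier R}"
    and "x \<noteq> \<zero>\<^bsub>M\<^esub>"
  shows "indecomposable R M"
  using module.cyclic_indecomposable[OF assms] pullback_nonunits_add_closed by blast

end

lemma local_pullback_of_dvr:
  assumes "dvr R1" and "dvr R2" and "field Rb"
    and "V1 \<in> ring_hom R1 Rb" and "maximalideal (a_kernel R1 Rb V1) R1"
    and "V2 \<in> ring_hom R2 Rb" and "maximalideal (a_kernel R2 Rb V2) R2"
  shows "local_pullback Rb R1 V1 R2 V2"
proof (intro local_pullback.intro local_pullback_axioms.intro)
  interpret R1: principal_domain R1 using \<open>dvr R1\<close> by (simp add: dvr_def)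
  interpret R2: principal_domain R2 using \<open>dvr R2\<close> by (simp add: dvr_def)
  interpret Rb: field Rb by fact
  show "ring_hom_cring R1 Rb V1" and "ring_hom_cring R2 Rb V2"
    using ring_hom_cringI R1.is_cring R2.is_cring Rb.is_cring assms by blast+
  show "carrier R1 - a_kernel R1 Rb V1 \<subseteq> Units R1" and "carrier R2 - a_kernel R2 Rb V2 \<subseteq> Units R2"
    using dvr_Units assms by blast+
qed fact

text \<open>
  One side of \<open>(A \<rightarrow> Rb \<leftarrow> B)\<close>: \<open>A\<close> is \<open>R\<^sub>i\<close> or \<open>R\<^sub>i/P\<^sub>i\<^sup>n\<close>, \<open>g\<close> the map induced by \<open>V\<^sub>i\<close>
  and \<open>x\<close> the class of \<open>1\<close>.
\<close>

locale cyclic_reduction = module R A + ring_hom_ring R Rb V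
  for R :: "('r, 'm) ring_scheme" and A :: "('r, 'x, 'p) module_scheme"
    and Rb :: "('c, 'n) ring_scheme" and V :: "'r \<Rightarrow> 'c" +
  fixes g :: "'x \<Rightarrow> 'c" and x :: 'x
  assumes reduction_closed: "a \<in> carrier A \<Longrightarrow> g a \<in> carrier Rb"
    and reduction_add:
      "a \<in> carrier A \<Longrightarrow> b \<in> carrier A \<Longrightarrow> g (a \<oplus>\<^bsub>A\<^esub> b) = g a \<oplus>\<^bsub>Rb\<^esub> g b"
    and reduction_smult: "r \<in> carrier R \<Longrightarrow> a \<in> carrier A \<Longrightarrow> g (r \<odot>\<^bsub>A\<^esub> a) = V r \<otimes>\<^bsub>Rb\<^esub> g a"
    and generator_closed: "x \<in> carrier A"
    and reduction_generator: "g x = \<one>\<^bsub>Rb\<^esub>"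
    and generates: "carrier A = {r \<odot>\<^bsub>A\<^esub> x | r. r \<in> carrier R}"
begin

lemma reduction_smult_generator: "r \<in> carrier R \<Longrightarrow> g (r \<odot>\<^bsub>A\<^esub> x) = V r"
  using reduction_smult generator_closed reduction_generator by simp

lemma reduction_zero: "g \<zero>\<^bsub>A\<^esub> = \<zero>\<^bsub>Rb\<^esub>"
  using reduction_smult_generator[of "\<zero>\<^bsub>R\<^esub>"] generator_closed by simp

lemma reduction_neg: "a \<in> carrier A \<Longrightarrow> g (\<ominus>\<^bsub>A\<^esub> a) = \<ominus>\<^bsub>Rb\<^esub> g a"
  using reduction_smult[of "\<ominus>\<^bsub>R\<^esub> \<one>\<^bsub>R\<^esub>" a] reduction_closed[of a]
  by (simp add: smult_l_minus S.l_minus)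

end

lemma cyclic_reduction_self_module:
  assumes "cring R" and "ring Rb" and "V \<in> ring_hom R Rb"
  shows "cyclic_reduction R (self_module R) Rb V V \<one>\<^bsub>R\<^esub>"
proof -
  interpret R: cring R by fact
  interpret V: ring_hom_ring R Rb V by (rule ring_hom_ringI2) (fact R.ring_axioms assms)+
  show ?thesis
  proof (intro cyclic_reduction.intro cyclic_reduction_axioms.intro)
    show "module R (self_module R)" by (rule module_self_module) fact
    show "ring_hom_ring R Rb V" by (rule V.ring_hom_ring_axioms)
    show "carrier (self_module R) = {r \<odot>\<^bsub>self_module R\<^esub> \<one>\<^bsub>R\<^esub> | r. r \<in> carrier R}"
      by (force simp: self_module_def)
  qed (auto simp: self_module_def)
qed

lemma cyclic_reduction_quot_module:
  assumes "cring R" and "ring Rb" and "V \<in> ring_hom R Rb"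
    and "ideal I R" and "I \<subseteq> a_kernel R Rb V"
  shows "cyclic_reduction R (quot_module R I) Rb V (induced_map V) (I +>\<^bsub>R\<^esub> \<one>\<^bsub>R\<^esub>)"
proof -
  interpret R: cring R by fact
  interpret I: ideal I R by fact
  interpret V: ring_hom_ring R Rb V by (rule ring_hom_ringI2) (fact R.ring_axioms assms)+
  have carrier: "carrier (quot_module R I) = (\<lambda>a. I +>\<^bsub>R\<^esub> a) ` carrier R"
    by (auto simp: quot_module_def A_RCOSETS_def')
  have add: "(I +>\<^bsub>R\<^esub> a) \<oplus>\<^bsub>quot_module R I\<^esub> (I +>\<^bsub>R\<^esub> b) = I +>\<^bsub>R\<^esub> (a \<oplus>\<^bsub>R\<^esub> b)"
    if "a \<in> carrier R" "b \<in> carrier R" for a b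
    using that by (simp add: quot_module_def I.a_rcos_sum)
  have smult: "r \<odot>\<^bsub>quot_module R I\<^esub> (I +>\<^bsub>R\<^esub> a) = I +>\<^bsub>R\<^esub> (r \<otimes>\<^bsub>R\<^esub> a)"
    if "r \<in> carrier R" "a \<in> carrier R" for r a
    using that by (simp add: quot_module_def I.rcoset_mult_add)
  have generator: "r \<odot>\<^bsub>quot_module R I\<^esub> (I +>\<^bsub>R\<^esub> \<one>\<^bsub>R\<^esub>) = I +>\<^bsub>R\<^esub> r" if "r \<in> carrier R" for r
    using smult[OF that R.one_closed] that by simp
  note induced = V.induced_map_coset[OF assms(4,5)]
  show ?thesis
  proof (intro cyclic_reduction.intro cyclic_reduction_axioms.intro)
    show "module R (quot_module R I)" by (rule module_quot_module) fact+
    show "ring_hom_ring R Rb V" by (rule V.ring_hom_ring_axioms)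
    show "carrier (quot_module R I) =
      {r \<odot>\<^bsub>quot_module R I\<^esub> (I +>\<^bsub>R\<^esub> \<one>\<^bsub>R\<^esub>) | r. r \<in> carrier R}"
      unfolding carrier using generator by blast
    show "induced_map V a \<in> carrier Rb" if "a \<in> carrier (quot_module R I)" for a
      using that unfolding carrier by (auto simp: induced)
    show "induced_map V (a \<oplus>\<^bsub>quot_module R I\<^esub> b) = induced_map V a \<oplus>\<^bsub>Rb\<^esub> induced_map V b"
      if "a \<in> carrier (quot_module R I)" "b \<in> carrier (quot_module R I)" for a b
      using that unfolding carrier by (auto simp: induced add)
    show "induced_map V (r \<odot>\<^bsub>quot_module R I\<^esub> a) = V r \<otimes>\<^bsub>Rb\<^esub> induced_map V a"
      if "r \<in> carrier R" "a \<in> carrier (quot_module R I)" for r a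
      using that unfolding carrier by (auto simp: induced smult)
    show "I +>\<^bsub>R\<^esub> \<one>\<^bsub>R\<^esub> \<in> carrier (quot_module R I)" unfolding carrier by blast
    show "induced_map V (I +>\<^bsub>R\<^esub> \<one>\<^bsub>R\<^esub>) = \<one>\<^bsub>Rb\<^esub>" by (simp add: induced)
  qed
qed

lemma cyclic_reduction_quot_PIdl_pow:
  fixes n :: nat
  assumes "cring R" and "ring Rb" and "V \<in> ring_hom R Rb"
    and "p \<in> carrier R" and "PIdl\<^bsub>R\<^esub> p \<subseteq> a_kernel R Rb V" and "n \<ge> 1"
  shows "cyclic_reduction R (quot_module R (PIdl\<^bsub>R\<^esub> (p [^]\<^bsub>R\<^esub> n))) Rb V (induced_map V)
    (PIdl\<^bsub>R\<^esub> (p [^]\<^bsub>R\<^esub> n) +>\<^bsub>R\<^esub> \<one>\<^bsub>R\<^esub>)"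
proof (rule cyclic_reduction_quot_module[OF assms(1-3)])
  interpret R: cring R by fact
  show "ideal (PIdl\<^bsub>R\<^esub> (p [^]\<^bsub>R\<^esub> n)) R" using assms(4) by (simp add: R.cgenideal_ideal)
  show "PIdl\<^bsub>R\<^esub> (p [^]\<^bsub>R\<^esub> n) \<subseteq> a_kernel R Rb V"
    using R.PIdl_pow_subset assms(4-6) by blast
qed

lemma pb_module_simps:
  "carrier (pb_module A B g h) = {(a, b). a \<in> carrier A \<and> b \<in> carrier B \<and> g a = h b}"
  "\<zero>\<^bsub>pb_module A B g h\<^esub> = (\<zero>\<^bsub>A\<^esub>, \<zero>\<^bsub>B\<^esub>)"
  "x \<oplus>\<^bsub>pb_module A B g h\<^esub> y = (fst x \<oplus>\<^bsub>A\<^esub> fst y, snd x \<oplus>\<^bsub>B\<^esub> snd y)"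
  "r \<odot>\<^bsub>pb_module A B g h\<^esub> x = (fst r \<odot>\<^bsub>A\<^esub> fst x, snd r \<odot>\<^bsub>B\<^esub> snd x)"
  by (simp_all add: pb_module_def)

lemma submodule_update_mult_one:
  "submodule N R (M\<lparr>mult := f, one := e\<rparr>) \<longleftrightarrow> submodule N R M"
  by (simp add: submodule_def submodule_axioms_def)

lemma module_update_mult_one: "module R (M\<lparr>mult := f, one := e\<rparr>) \<longleftrightarrow> module R M"
  by (simp add: module_def module_axioms_def abelian_group_def abelian_monoid_def
      abelian_group_axioms_def)

lemma separated_update_mult_one:
  "separated R1 R2 V1 V2 P1 P2 (M\<lparr>mult := f, one := e\<rparr>) \<longleftrightarrow> separated R1 R2 V1 V2 P1 P2 M"
  by (simp add: separated_def ideal_mod_prod_def submodule_update_mult_one)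

lemma indecomposable_update_mult_one:
  "indecomposable R (M\<lparr>mult := f, one := e\<rparr>) \<longleftrightarrow> indecomposable R M"
  by (simp add: indecomposable_def submodule_update_mult_one set_add_def)

lemma pap_multiplication_module_update_mult_one:
  "pap_multiplication_module R (M\<lparr>mult := f, one := e\<rparr>) \<longleftrightarrow> pap_multiplication_module R M"
  by (simp add: pap_multiplication_module_def pseudo_absorbing_primary_def mod_colon_def
      ideal_mod_prod_def submodule_update_mult_one)

text \<open>
  The module-theoretic notions never look at the multiplication of a module record, so this
  identifies \<open>R\<close> as an \<open>R\<close>-module with \<open>(R\<^sub>1 \<rightarrow> Rb \<leftarrow> R\<^sub>2)\<close>.
\<close>

lemma self_module_pullback_ring:
  "self_module (pullback_ring R1 R2 V1 V2) =
    (pb_module (self_module R1) (self_module R2) V1 V2)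
      \<lparr>mult := monoid.mult (pullback_ring R1 R2 V1 V2), one := \<one>\<^bsub>pullback_ring R1 R2 V1 V2\<^esub>\<rparr>"
  by (simp add: self_module_def pb_module_def pullback_ring_def)

locale reduction_pair =
  A: cyclic_reduction R1 A Rb V1 g a0 + B: cyclic_reduction R2 B Rb V2 h b0
  for R1 A Rb V1 g a0 R2 B V2 h b0
begin

abbreviation (input) R where "R \<equiv> pullback_ring R1 R2 V1 V2"
abbreviation (input) M where "M \<equiv> pb_module A B g h"

lemma module_pb_module: "module R M"
proof (rule moduleI)
  show "cring R"
    using cring_pullback_ring A.R.is_cring B.R.is_cring A.S.ring_axioms A.homh B.homh .
  show "abelian_group M"
  proof (rule abelian_groupI)
    fix x assume "x \<in> carrier M"
    then obtain a b where "x = (a, b)" "a \<in> carrier A" "b \<in> carrier B" "g a = h b"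
      by (auto simp: pb_module_simps)
    then show "\<exists>y\<in>carrier M. y \<oplus>\<^bsub>M\<^esub> x = \<zero>\<^bsub>M\<^esub>"
      by (intro bexI[of _ "(\<ominus>\<^bsub>A\<^esub> a, \<ominus>\<^bsub>B\<^esub> b)"])
         (simp_all add: pb_module_simps A.M.l_neg B.M.l_neg A.reduction_neg B.reduction_neg)
  qed (auto simp: pb_module_simps A.M.a_ac B.M.a_ac A.reduction_add B.reduction_add
      A.reduction_zero B.reduction_zero)
qed (auto simp: pb_module_simps pullback_ring_simps A.reduction_smult B.reduction_smult
    A.reduction_add B.reduction_add A.smult_l_distr B.smult_l_distr A.smult_r_distr B.smult_r_distr
    A.smult_assoc1 B.smult_assoc1)

lemma pb_generator_closed: "(a0, b0) \<in> carrier M"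
  using A.generator_closed B.generator_closed A.reduction_generator B.reduction_generator
  by (simp add: pb_module_simps)

lemma pb_generator_nonzero: "\<one>\<^bsub>Rb\<^esub> \<noteq> \<zero>\<^bsub>Rb\<^esub> \<Longrightarrow> (a0, b0) \<noteq> \<zero>\<^bsub>M\<^esub>"
  using A.reduction_generator A.reduction_zero by (auto simp: pb_module_simps)

text \<open>
  \<open>(r\<^sub>1 a\<^sub>0, r\<^sub>2 b\<^sub>0)\<close> lies in \<open>M\<close> iff \<open>V\<^sub>1 r\<^sub>1 = V\<^sub>2 r\<^sub>2\<close>, i.e. iff \<open>(r\<^sub>1, r\<^sub>2) \<in> R\<close>, so \<open>M\<close> is
  cyclic over the pullback.
\<close>

lemma pb_module_cyclic: "carrier M = {r \<odot>\<^bsub>M\<^esub> (a0, b0) | r. r \<in> carrier R}"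
proof (intro equalityI subsetI)
  fix y assume "y \<in> carrier M"
  then obtain a b where y: "y = (a, b)" "a \<in> carrier A" "b \<in> carrier B" "g a = h b"
    by (auto simp: pb_module_simps)
  obtain r1 where r1: "r1 \<in> carrier R1" "a = r1 \<odot>\<^bsub>A\<^esub> a0" using y(2) A.generates by blast
  obtain r2 where r2: "r2 \<in> carrier R2" "b = r2 \<odot>\<^bsub>B\<^esub> b0" using y(3) B.generates by blast
  have "V1 r1 = V2 r2"
    using y(4) r1 r2 A.reduction_smult_generator B.reduction_smult_generator by simp
  then have "(r1, r2) \<in> carrier R" using r1 r2 by (simp add: pullback_ring_simps)
  moreover have "y = (r1, r2) \<odot>\<^bsub>M\<^esub> (a0, b0)" using y r1 r2 by (simp add: pb_module_simps)
  ultimately show "y \<in> {r \<odot>\<^bsub>M\<^esub> (a0, b0) | r. r \<in> carrier R}" by blast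
next
  fix y assume "y \<in> {r \<odot>\<^bsub>M\<^esub> (a0, b0) | r. r \<in> carrier R}"
  then show "y \<in> carrier M"
    using module.smult_closed[OF module_pb_module] pb_generator_closed by blast
qed

lemma separated_pb_module:
  assumes P1: "P1 \<subseteq> a_kernel R1 Rb V1" and P2: "P2 \<subseteq> a_kernel R2 Rb V2"
  shows "separated R1 R2 V1 V2 P1 P2 M"
proof -
  interpret M: module R M by (rule module_pb_module)
  have P1_kernel: "a \<in> carrier R1 \<and> V1 a = \<zero>\<^bsub>Rb\<^esub>" if "a \<in> P1" for a
    using P1 that unfolding a_kernel_def' by blast
  have P2_kernel: "b \<in> carrier R2 \<and> V2 b = \<zero>\<^bsub>Rb\<^esub>" if "b \<in> P2" for b
    using P2 that unfolding a_kernel_def' by blast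
  let ?K1 = "{y \<in> carrier M. snd y = \<zero>\<^bsub>B\<^esub>}" and ?K2 = "{y \<in> carrier M. fst y = \<zero>\<^bsub>A\<^esub> \<and> h (snd y) = \<zero>\<^bsub>Rb\<^esub>}"
  have K1: "submodule ?K1 R M" and K2: "submodule ?K2 R M"
    by (auto intro!: M.submoduleI' simp: pb_module_simps pullback_ring_simps A.reduction_zero
        B.reduction_zero A.reduction_add B.reduction_add A.reduction_smult B.reduction_smult)
  have P1_K1: "r \<odot>\<^bsub>M\<^esub> y \<in> ?K1" if "r \<in> {(a, \<zero>\<^bsub>R2\<^esub>) | a. a \<in> P1}" "y \<in> carrier M" for r y
  proof -
    have "r \<in> carrier R" using that(1) P1_kernel by (auto simp: pullback_ring_simps)
    then show ?thesis using that M.smult_closed by (auto simp: pb_module_simps)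
  qed
  have P2_K2: "r \<odot>\<^bsub>M\<^esub> y \<in> ?K2" if "r \<in> {(\<zero>\<^bsub>R1\<^esub>, b) | b. b \<in> P2}" "y \<in> carrier M" for r y
  proof -
    have "r \<in> carrier R" using that(1) P2_kernel by (auto simp: pullback_ring_simps)
    then show ?thesis
      using that M.smult_closed P2_kernel
      by (auto simp: pb_module_simps B.reduction_smult B.reduction_closed)
  qed
  have "ideal_mod_prod R {(a, \<zero>\<^bsub>R2\<^esub>) | a. a \<in> P1} M \<subseteq> ?K1"
    by (rule M.ideal_mod_prod_least[OF K1 P1_K1])
  moreover have "ideal_mod_prod R {(\<zero>\<^bsub>R1\<^esub>, b) | b. b \<in> P2} M \<subseteq> ?K2"
    by (rule M.ideal_mod_prod_least[OF K2 P2_K2])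
  moreover have "?K1 \<inter> ?K2 \<subseteq> {\<zero>\<^bsub>M\<^esub>}" by (auto simp: pb_module_simps)
  ultimately show ?thesis
    unfolding separated_def using M.zero_in_ideal_mod_prod by blast
qed

lemma pb_module_properties:
  assumes "local_pullback Rb R1 V1 R2 V2"
    and "P1 \<subseteq> a_kernel R1 Rb V1" and "P2 \<subseteq> a_kernel R2 Rb V2"
  shows "module R M \<and> separated R1 R2 V1 V2 P1 P2 M \<and> indecomposable R M \<and>
    pap_multiplication_module R M"
proof -
  interpret M: module R M by (rule module_pb_module)
  have "\<one>\<^bsub>Rb\<^esub> \<noteq> \<zero>\<^bsub>Rb\<^esub>"
    using assms(1) fieldE(2) unfolding local_pullback_def by blast
  then show ?thesis
    using module_pb_module separated_pb_module[OF assms(2,3)]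
      local_pullback.cyclic_indecomposable[OF assms(1) module_pb_module pb_generator_closed
        pb_module_cyclic pb_generator_nonzero]
      M.cyclic_pap_multiplication_module[OF pb_generator_closed pb_module_cyclic]
    by blast
qed
end

theorem corollary3p3:
  fixes R1 :: "'a ring" and R2 :: "'b ring" and Rb :: "'c ring"
    and p1 :: 'a and p2 :: 'b and V1 :: "'a \<Rightarrow> 'c" and V2 :: "'b \<Rightarrow> 'c"
    and n m :: nat
  assumes "dvr R1" and "dvr R2"
    and "p1 \<in> carrier R1" and "p2 \<in> carrier R2"
    and "maximalideal (PIdl\<^bsub>R1\<^esub> p1) R1" and "maximalideal (PIdl\<^bsub>R2\<^esub> p2) R2"
    and "field Rb"
    and "V1 \<in> ring_hom R1 Rb" and "V1 ` carrier R1 = carrier Rb"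
    and "a_kernel R1 Rb V1 = PIdl\<^bsub>R1\<^esub> p1"
    and "V2 \<in> ring_hom R2 Rb" and "V2 ` carrier R2 = carrier Rb"
    and "a_kernel R2 Rb V2 = PIdl\<^bsub>R2\<^esub> p2"
    and "n \<ge> 1" and "m \<ge> 1"
  shows
    "let R = pullback_ring R1 R2 V1 V2;
         P1 = PIdl\<^bsub>R1\<^esub> p1; P2 = PIdl\<^bsub>R2\<^esub> p2;
         M1 = self_module R;
         M2 = pb_module (quot_module R1 (PIdl\<^bsub>R1\<^esub> (p1 [^]\<^bsub>R1\<^esub> n)))
                        (quot_module R2 (PIdl\<^bsub>R2\<^esub> (p2 [^]\<^bsub>R2\<^esub> m)))
                        (induced_map V1) (induced_map V2);
         M3 = pb_module (self_module R1)
                        (quot_module R2 (PIdl\<^bsub>R2\<^esub> (p2 [^]\<^bsub>R2\<^esub> m)))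
                        V1 (induced_map V2);
         M4 = pb_module (quot_module R1 (PIdl\<^bsub>R1\<^esub> (p1 [^]\<^bsub>R1\<^esub> n)))
                        (self_module R2)
                        (induced_map V1) V2
     in (module R M1 \<and> separated R1 R2 V1 V2 P1 P2 M1 \<and>
           indecomposable R M1 \<and> pap_multiplication_module R M1)
      \<and> (module R M2 \<and> separated R1 R2 V1 V2 P1 P2 M2 \<and>
           indecomposable R M2 \<and> pap_multiplication_module R M2)
      \<and> (module R M3 \<and> separated R1 R2 V1 V2 P1 P2 M3 \<and>
           indecomposable R M3 \<and> pap_multiplication_module R M3)
      \<and> (module R M4 \<and> separated R1 R2 V1 V2 P1 P2 M4 \<and>
           indecomposable R M4 \<and> pap_multiplication_module R M4)"
proof -
  interpret R1: principal_domain R1 using \<open>dvr R1\<close> by (simp add: dvr_def)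
  interpret R2: principal_domain R2 using \<open>dvr R2\<close> by (simp add: dvr_def)
  interpret Rb: field Rb by fact
  have local: "local_pullback Rb R1 V1 R2 V2"
    by (rule local_pullback_of_dvr) (use assms in simp_all)
  have kernels: "PIdl\<^bsub>R1\<^esub> p1 \<subseteq> a_kernel R1 Rb V1" "PIdl\<^bsub>R2\<^esub> p2 \<subseteq> a_kernel R2 Rb V2"
    using assms by simp_all
  let ?R = "pullback_ring R1 R2 V1 V2"
  have pb: "module ?R (pb_module A B g h) \<and>
      separated R1 R2 V1 V2 (PIdl\<^bsub>R1\<^esub> p1) (PIdl\<^bsub>R2\<^esub> p2) (pb_module A B g h) \<and>
      indecomposable ?R (pb_module A B g h) \<and> pap_multiplication_module ?R (pb_module A B g h)"
    if "cyclic_reduction R1 A Rb V1 g a0" and "cyclic_reduction R2 B Rb V2 h b0" for A g a0 B h b0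
    by (rule reduction_pair.pb_module_properties[OF reduction_pair.intro[OF that] local kernels])
  note self = cyclic_reduction_self_module[OF _ Rb.ring_axioms]
  note quot = cyclic_reduction_quot_PIdl_pow[OF _ Rb.ring_axioms]
  have self1: "cyclic_reduction R1 (self_module R1) Rb V1 V1 \<one>\<^bsub>R1\<^esub>"
    and self2: "cyclic_reduction R2 (self_module R2) Rb V2 V2 \<one>\<^bsub>R2\<^esub>"
    using self R1.is_cring R2.is_cring assms by blast+
  show ?thesis
    unfolding Let_def self_module_pullback_ring module_update_mult_one separated_update_mult_one
      indecomposable_update_mult_one pap_multiplication_module_update_mult_one
    using pb[OF self1 self2] pb[OF self1 quot[OF R2.is_cring _ _ kernels(2)]]
      pb[OF quot[OF R1.is_cring _ _ kernels(1)] self2]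
      pb[OF quot[OF R1.is_cring _ _ kernels(1)] quot[OF R2.is_cring _ _ kernels(2)]] assms
    by simp
qed

end
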